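(* Assume (A7) and (A8) of the context. Then for every $\delta\in\mathbb{R}^D$ with $\|\delta\|\le\|\theta^*\|$, with probability $1-\delta_{n_q}$, $$\Lambda_{\min}\big[\nabla^2_{\theta_S}\ell(\theta^*+\delta)\big]\ge\frac{D_{\min,2}}{C_{\mathrm{ratio}}^2},$$ where $\nabla^2_{\theta_S}\ell$ is the submatrix of the Hessian of $\ell$ with rows and columns indexed by the blocks in $S$.
   Context: Let $E=\{(u,v):1\le v\le u\le m\}$, $D=b|E|$, $\psi:\mathbb{R}^2\to\mathbb{R}^b$, and $f:\mathbb{R}^m\to\mathbb{R}^D$ the concatenation of the blocks $f_t(x)=\psi(x_u,x_v)$, $t=(u,v)\in E$; $f_S$ is the subvector of blocks in $S$. $P,Q$ distributions on $\mathbb{R}^m$ with densities $p,q$; samples $x_p^{(1..n_p)}$ i.i.d. $P$, $x_q^{(1..n_q)}$ i.i.d. $Q$. $r(x;\theta)=\exp(\theta^\top f(x))/N(\theta)$, $N(\theta)=\mathbb{E}_Q[\exp(\theta^\top f(x))]$; $\hat N(\theta)=\frac1{n_q}\sum_i\exp(\theta^\top f(x_q^{(i)}))$; $\hat r(x;\theta)=\exp(\theta^\top f(x))/\hat N(\theta)$; $\ell(\theta)=-\frac1{n_p}\sum_i\theta^\top f(x_p^{(i)})+\log\hat N(\theta)$. $\theta^*$ is the true parameter ($p=q\,r(\cdot;\theta^* )$), $S=\{t:\theta^*_t\ne0\}$. $\|\cdot\|$: Euclidean/spectral norm; $\Lambda_{\min}$ smallest eigenvalue. (A7) For all $\delta$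 with $\|\delta\|\le\|\theta^*\|$ and all $x$: $0<C_{\min}\le r(x;\theta^*+\delta)\le C_{\max}<\infty$; moreover $\frac1{C_{\mathrm{ratio}}}\le\hat r(x;\theta^*+\delta)\le C_{\mathrm{ratio}}$ and $\|f_t(x)\|\le C_{f_t,\max}$ for constants. (A8) With probability 1: $\max_{t\in E}\frac1{n_q}\sum_i\|f_t(x_q^{(i)})\|\le D_{\max,1}<\infty$, $\|\frac1{n_q}\sum_if(x_q^{(i)})f(x_q^{(i)})^\top\|\le D_{\max,2}$ and $\|\widehat{\mathrm{Cov}}_q[f]\|\le D_{\max,2}<\infty$; with probability $1-\delta_{n_q}$, $\Lambda_{\min}(\widehat{\mathrm{Cov}}_q[f_S])\ge D_{\min,2}>0$; $\widehat{\mathrm{Cov}}_q$ is the sample covariance over the $Q$-sample. *)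

theory Defs
  imports "HOL-Probability.Probability"
begin

text \<open>Points of R^m are functions nat => real, coordinates 1..m.
  Parameter vectors in R^D are functions on the index set
  Idx m b = E m \<times> {..<b}; index ((u,v),k) is the k-th component of block (u,v).\<close>

definition E :: "nat \<Rightarrow> (nat \<times> nat) set" where
  "E m = {(u,v). 1 \<le> v \<and> v \<le> u \<and> u \<le> m}"

definition Idx :: "nat \<Rightarrow> nat \<Rightarrow> ((nat \<times> nat) \<times> nat) set" where
  "Idx m b = E m \<times> {..<b}"

definition IdxS :: "(nat \<times> nat) set \<Rightarrow> nat \<Rightarrow> ((nat \<times> nat) \<times> nat) set" where
  "IdxS S b = S \<times> {..<b}"

definition feat :: "(real \<Rightarrow> real \<Rightarrow> nat \<Rightarrow> real) \<Rightarrow> (nat \<Rightarrow> real) \<Rightarrow> (nat \<times> nat) \<times> nat \<Rightarrow> real" where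
  "feat \<psi> x i = (case i of ((u,v),k) \<Rightarrow> \<psi> (x u) (x v) k)"

definition ip :: "'i set \<Rightarrow> ('i \<Rightarrow> real) \<Rightarrow> ('i \<Rightarrow> real) \<Rightarrow> real" where
  "ip J a c = (\<Sum>i\<in>J. a i * c i)"

definition vnorm :: "'i set \<Rightarrow> ('i \<Rightarrow> real) \<Rightarrow> real" where
  "vnorm J a = sqrt (\<Sum>i\<in>J. (a i)\<^sup>2)"

definition block_norm :: "nat \<Rightarrow> ((nat \<times> nat) \<times> nat \<Rightarrow> real) \<Rightarrow> nat \<times> nat \<Rightarrow> real" where
  "block_norm b a t = sqrt (\<Sum>k<b. (a (t,k))\<^sup>2)"

definition mat_vec :: "'i set \<Rightarrow> ('i \<Rightarrow> 'i \<Rightarrow> real) \<Rightarrow> ('i \<Rightarrow> real) \<Rightarrow> 'i \<Rightarrow> real" where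
  "mat_vec J H a = (\<lambda>i. \<Sum>j\<in>J. H i j * a j)"

definition mat_norm :: "'i set \<Rightarrow> ('i \<Rightarrow> 'i \<Rightarrow> real) \<Rightarrow> real" where
  "mat_norm J H = Sup {vnorm J (mat_vec J H a) | a. vnorm J a \<le> 1}"

definition eigenvalues :: "'i set \<Rightarrow> ('i \<Rightarrow> 'i \<Rightarrow> real) \<Rightarrow> real set" where
  "eigenvalues J H = {e. \<exists>a. (\<exists>j\<in>J. a j \<noteq> 0) \<and> (\<forall>i\<in>J. mat_vec J H a i = e * a i)}"

definition lambda_min :: "'i set \<Rightarrow> ('i \<Rightarrow> 'i \<Rightarrow> real) \<Rightarrow> real" where
  "lambda_min J H = Min (eigenvalues J H)"

definition smean :: "nat \<Rightarrow> (nat \<Rightarrow> 'i \<Rightarrow> real) \<Rightarrow> 'i \<Rightarrow> real" where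
  "smean n g = (\<lambda>i. (\<Sum>l<n. g l i) / real n)"

definition ssecond :: "nat \<Rightarrow> (nat \<Rightarrow> 'i \<Rightarrow> real) \<Rightarrow> 'i \<Rightarrow> 'i \<Rightarrow> real" where
  "ssecond n g = (\<lambda>i j. (\<Sum>l<n. g l i * g l j) / real n)"

definition scov :: "nat \<Rightarrow> (nat \<Rightarrow> 'i \<Rightarrow> real) \<Rightarrow> 'i \<Rightarrow> 'i \<Rightarrow> real" where
  "scov n g = (\<lambda>i j. (\<Sum>l<n. (g l i - smean n g i) * (g l j - smean n g j)) / real n)"

definition Nfun :: "nat \<Rightarrow> nat \<Rightarrow> (real \<Rightarrow> real \<Rightarrow> nat \<Rightarrow> real) \<Rightarrow> (nat \<Rightarrow> real) measure
     \<Rightarrow> ((nat \<times> nat) \<times> nat \<Rightarrow> real) \<Rightarrow> real" where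
  "Nfun m b \<psi> Q \<theta> = (\<integral>x. exp (ip (Idx m b) \<theta> (feat \<psi> x)) \<partial>Q)"

definition rfun :: "nat \<Rightarrow> nat \<Rightarrow> (real \<Rightarrow> real \<Rightarrow> nat \<Rightarrow> real) \<Rightarrow> (nat \<Rightarrow> real) measure
     \<Rightarrow> (nat \<Rightarrow> real) \<Rightarrow> ((nat \<times> nat) \<times> nat \<Rightarrow> real) \<Rightarrow> real" where
  "rfun m b \<psi> Q x \<theta> = exp (ip (Idx m b) \<theta> (feat \<psi> x)) / Nfun m b \<psi> Q \<theta>"

definition Nhat :: "nat \<Rightarrow> nat \<Rightarrow> (real \<Rightarrow> real \<Rightarrow> nat \<Rightarrow> real) \<Rightarrow> nat \<Rightarrow> (nat \<Rightarrow> nat \<Rightarrow> real)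
     \<Rightarrow> ((nat \<times> nat) \<times> nat \<Rightarrow> real) \<Rightarrow> real" where
  "Nhat m b \<psi> nq xq \<theta> = (\<Sum>l<nq. exp (ip (Idx m b) \<theta> (feat \<psi> (xq l)))) / real nq"

definition rhat :: "nat \<Rightarrow> nat \<Rightarrow> (real \<Rightarrow> real \<Rightarrow> nat \<Rightarrow> real) \<Rightarrow> nat \<Rightarrow> (nat \<Rightarrow> nat \<Rightarrow> real)
     \<Rightarrow> (nat \<Rightarrow> real) \<Rightarrow> ((nat \<times> nat) \<times> nat \<Rightarrow> real) \<Rightarrow> real" where
  "rhat m b \<psi> nq xq x \<theta> = exp (ip (Idx m b) \<theta> (feat \<psi> x)) / Nhat m b \<psi> nq xq \<theta>"

definition loss :: "nat \<Rightarrow> nat \<Rightarrow> (real \<Rightarrow> real \<Rightarrow> nat \<Rightarrow> real) \<Rightarrow> nat \<Rightarrow> (nat \<Rightarrow> nat \<Rightarrow> real)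
     \<Rightarrow> nat \<Rightarrow> (nat \<Rightarrow> nat \<Rightarrow> real) \<Rightarrow> ((nat \<times> nat) \<times> nat \<Rightarrow> real) \<Rightarrow> real" where
  "loss m b \<psi> np xp nq xq \<theta> =
     - (\<Sum>l<np. ip (Idx m b) \<theta> (feat \<psi> (xp l))) / real np + ln (Nhat m b \<psi> nq xq \<theta>)"

definition pderiv_at :: "'i \<Rightarrow> (('i \<Rightarrow> real) \<Rightarrow> real) \<Rightarrow> ('i \<Rightarrow> real) \<Rightarrow> real" where
  "pderiv_at i g \<theta> = deriv (\<lambda>s. g (\<theta>(i := s))) (\<theta> i)"

definition hessian :: "(('i \<Rightarrow> real) \<Rightarrow> real) \<Rightarrow> ('i \<Rightarrow> real) \<Rightarrow> 'i \<Rightarrow> 'i \<Rightarrow> real" where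
  "hessian g \<theta> = (\<lambda>i j. pderiv_at i (pderiv_at j g) \<theta>)"

definition supp_blocks :: "nat \<Rightarrow> nat \<Rightarrow> ((nat \<times> nat) \<times> nat \<Rightarrow> real) \<Rightarrow> (nat \<times> nat) set" where
  "supp_blocks m b \<theta> = {t \<in> E m. \<exists>k<b. \<theta> (t,k) \<noteq> 0}"

definition Rm :: "nat \<Rightarrow> (nat \<Rightarrow> real) measure" where
  "Rm m = PiM {1..m} (\<lambda>_. borel)"

definition Lm :: "nat \<Rightarrow> (nat \<Rightarrow> real) measure" where
  "Lm m = PiM {1..m} (\<lambda>_. lborel)"

end

theory Submission
  imports Defs
begin

text \<open>At any parameter theta the Hessian of the empirical loss is the covariance of the
  features f(x_q^(i)) under the weights w_i = rhat(x_q^(i); theta) / n_q, which sum to one and by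
  (A7) are at least 1 / (C_ratio n_q). A weighted variance dominates the smallest weight times
  the unweighted sum of squared deviations, so on the S-block the quadratic form of the Hessian
  is at least 1 / C_ratio times that of the sample covariance. Comparing Rayleigh quotients gives
  Lambda_min >= D_min,2 / C_ratio on the event of (A8), which is stronger than claimed because
  C_ratio >= 1. The bound holds pointwise on that event.\<close>

definition sq_norm :: "'i set \<Rightarrow> ('i \<Rightarrow> real) \<Rightarrow> real" where
  "sq_norm K a = (\<Sum>i\<in>K. (a i)\<^sup>2)"

definition bilin_form :: "'i set \<Rightarrow> ('i \<Rightarrow> 'i \<Rightarrow> real) \<Rightarrow> ('i \<Rightarrow> real) \<Rightarrow> ('i \<Rightarrow> real) \<Rightarrow> real"
  where "bilin_form K H a c = (\<Sum>i\<in>K. \<Sum>j\<in>K. a i * H i j * c j)"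

abbreviation quad_form :: "'i set \<Rightarrow> ('i \<Rightarrow> 'i \<Rightarrow> real) \<Rightarrow> ('i \<Rightarrow> real) \<Rightarrow> real" where
  "quad_form K H a \<equiv> bilin_form K H a a"

definition symmetric_on :: "'i set \<Rightarrow> ('i \<Rightarrow> 'i \<Rightarrow> real) \<Rightarrow> bool" where
  "symmetric_on K H \<longleftrightarrow> (\<forall>i\<in>K. \<forall>j\<in>K. H i j = H j i)"

lemma ip_commute: "ip K a c = ip K c a"
  unfolding ip_def by (simp add: mult.commute)

lemma ip_self: "ip K a a = sq_norm K a"
  unfolding ip_def sq_norm_def by (simp add: power2_eq_square)

lemma ip_cong: "(\<And>i. i \<in> K \<Longrightarrow> c i = c' i) \<Longrightarrow> ip K a c = ip K a c'"
  unfolding ip_def by (intro sum.cong) auto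

lemma ip_unit_vector:
  assumes "finite K" "j \<in> K"
  shows "ip K (\<lambda>i. if i = j then 1 else 0) c = c j"
  proof -
  have "ip K (\<lambda>i. if i = j then 1 else 0) c = (\<Sum>i\<in>K. if i = j then c i else 0)"
    unfolding ip_def by (intro sum.cong) auto
  then show ?thesis using assms by simp
qed

lemma sq_norm_unit_vector:
  assumes "finite K" "j \<in> K"
  shows "sq_norm K (\<lambda>i. if i = j then 1 else 0) = 1"
  using ip_unit_vector[OF assms, of "\<lambda>i. if i = j then 1 else 0"] by (simp add: ip_self)

lemma sq_norm_nonneg: "0 \<le> sq_norm K a"
  unfolding sq_norm_def by (simp add: sum_nonneg)

lemma sq_norm_pos:
  assumes "finite K" "j \<in> K" "a j \<noteq> 0"
  shows "0 < sq_norm K a"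
  unfolding sq_norm_def using assms by (intro sum_pos2[where i=j]) auto

lemma sq_norm_eq_0_iff:
  assumes "finite K"
  shows "sq_norm K a = 0 \<longleftrightarrow> (\<forall>i\<in>K. a i = 0)"
  unfolding sq_norm_def using assms by (simp add: sum_nonneg_eq_0_iff)

lemma sq_norm_scale: "sq_norm K (\<lambda>i. r * a i) = r\<^sup>2 * sq_norm K a"
  unfolding sq_norm_def by (simp add: sum_distrib_left power_mult_distrib)

lemma sq_norm_add: "sq_norm K (\<lambda>i. v i + t * w i) = sq_norm K v + 2 * t * ip K v w + t\<^sup>2 * sq_norm K w"
  unfolding sq_norm_def ip_def
  by (simp add: algebra_simps sum.distrib sum_distrib_left power2_eq_square)

lemma bilin_form_eq_ip: "bilin_form K H a c = ip K a (mat_vec K H c)"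
  unfolding bilin_form_def ip_def mat_vec_def by (simp add: sum_distrib_left mult.assoc)

lemma bilin_form_commute:
  assumes "symmetric_on K H"
  shows "bilin_form K H a c = bilin_form K H c a"
proof -
  have "bilin_form K H a c = (\<Sum>j\<in>K. \<Sum>i\<in>K. a i * H i j * c j)"
    unfolding bilin_form_def by (rule sum.swap)
  also have "\<dots> = bilin_form K H c a"
    unfolding bilin_form_def using assms unfolding symmetric_on_def
    by (intro sum.cong refl) (auto simp: mult_ac)
  finally show ?thesis .
qed

lemma quad_form_cong: "(\<And>i. i \<in> K \<Longrightarrow> a i = c i) \<Longrightarrow> quad_form K H a = quad_form K H c"
  unfolding bilin_form_def by (intro sum.cong refl) auto

lemma quad_form_scale: "quad_form K H (\<lambda>i. r * a i) = r\<^sup>2 * quad_form K H a"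
  unfolding bilin_form_def by (simp add: sum_distrib_left power2_eq_square mult_ac)

lemma quad_form_add:
  assumes "symmetric_on K H"
  shows "quad_form K H (\<lambda>i. v i + t * w i)
    = quad_form K H v + 2 * t * bilin_form K H v w + t\<^sup>2 * quad_form K H w"
proof -
  have "quad_form K H (\<lambda>i. v i + t * w i)
      = quad_form K H v + t * bilin_form K H v w + t * bilin_form K H w v + t\<^sup>2 * quad_form K H w"
    unfolding bilin_form_def
    by (simp add: algebra_simps sum.distrib sum_distrib_left power2_eq_square)
  then show ?thesis using bilin_form_commute[OF assms, of w v] by simp
qed

lemma ip_mat_vec_eigenvector:
  assumes "\<forall>i\<in>K. mat_vec K H c i = e * c i"
  shows "ip K a (mat_vec K H c) = e * ip K a c"
proof -
  have "ip K a (mat_vec K H c) = ip K a (\<lambda>i. e * c i)"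
    using assms by (intro ip_cong) auto
  then show ?thesis by (simp add: ip_def sum_distrib_left mult_ac)
qed

lemma quad_form_eigenvector:
  assumes "\<forall>i\<in>K. mat_vec K H a i = e * a i"
  shows "quad_form K H a = e * sq_norm K a"
  using ip_mat_vec_eigenvector[OF assms, of a] by (simp add: bilin_form_eq_ip ip_self)

lemma eigenvectors_orthogonal:
  assumes "symmetric_on K H" "\<forall>i\<in>K. mat_vec K H a i = e * a i"
    "\<forall>i\<in>K. mat_vec K H c i = e' * c i" "e \<noteq> e'"
  shows "ip K a c = 0"
proof -
  have "e' * ip K a c = bilin_form K H a c"
    by (simp add: bilin_form_eq_ip ip_mat_vec_eigenvector[OF assms(3)])
  also have "\<dots> = bilin_form K H c a" by (rule bilin_form_commute[OF assms(1)])
  also have "\<dots> = e * ip K a c"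
    by (simp add: bilin_form_eq_ip ip_mat_vec_eigenvector[OF assms(2)] ip_commute)
  finally show ?thesis using assms(4) by simp
qed

lemma bessel_inequality:
  fixes v :: "'p \<Rightarrow> 'i \<Rightarrow> real"
  assumes "finite P"
    and unit: "\<forall>p\<in>P. sq_norm K (v p) = 1"
    and orth: "\<forall>p\<in>P. \<forall>q\<in>P. p \<noteq> q \<longrightarrow> ip K (v p) (v q) = 0"
  shows "(\<Sum>p\<in>P. (ip K (v p) x)\<^sup>2) \<le> sq_norm K x"
proof -
  define c where "c p = ip K (v p) x" for p
  define y where "y i = (\<Sum>p\<in>P. c p * v p i)" for i
  \<comment> \<open>the orthogonal projection of \<open>x\<close> onto the span of the \<open>v p\<close>\<close>
  have ip_v: "ip K (v p) (v q) = (if p = q then 1 else 0)" if "p \<in> P" "q \<in> P" for p q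
    using unit orth that by (auto simp: ip_self)
  have ip_y: "ip K y (v q) = c q" if "q \<in> P" for q
  proof -
    have "ip K y (v q) = (\<Sum>p\<in>P. c p * ip K (v p) (v q))"
      unfolding y_def ip_def sum_distrib_right sum_distrib_left
      by (subst sum.swap) (simp add: mult_ac)
    also have "\<dots> = (\<Sum>p\<in>P. if p = q then c q else 0)"
      using that by (intro sum.cong) (auto simp: ip_v)
    finally show ?thesis using that \<open>finite P\<close> by simp
  qed
  have ip_y_sum: "ip K z y = (\<Sum>p\<in>P. c p * ip K z (v p))" for z
    unfolding y_def ip_def sum_distrib_left
    by (subst sum.swap) (simp add: mult_ac)
  have xy: "ip K x y = (\<Sum>p\<in>P. (c p)\<^sup>2)"
    unfolding ip_y_sum by (simp add: c_def ip_commute power2_eq_square)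
  have yy: "sq_norm K y = (\<Sum>p\<in>P. (c p)\<^sup>2)"
    unfolding ip_self[symmetric] ip_y_sum by (simp add: ip_y power2_eq_square)
  have "0 \<le> sq_norm K (\<lambda>i. x i + (-1) * y i)" by (rule sq_norm_nonneg)
  also have "\<dots> = sq_norm K x - 2 * ip K x y + sq_norm K y"
    using sq_norm_add[of K x "-1" y] by simp
  finally show ?thesis using xy yy by (simp add: c_def)
qed

lemma card_orthonormal_le:
  fixes v :: "'p \<Rightarrow> 'i \<Rightarrow> real"
  assumes "finite P" "finite K"
    and unit: "\<forall>p\<in>P. sq_norm K (v p) = 1"
    and orth: "\<forall>p\<in>P. \<forall>q\<in>P. p \<noteq> q \<longrightarrow> ip K (v p) (v q) = 0"
  shows "card P \<le> card K"
proof -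
  define u where "u i = (\<lambda>j. if j = i then 1 else 0 :: real)" for i :: 'i
  have "real (card P) = (\<Sum>p\<in>P. sq_norm K (v p))" using unit by simp
  also have "\<dots> = (\<Sum>i\<in>K. \<Sum>p\<in>P. (v p i)\<^sup>2)"
    unfolding sq_norm_def by (rule sum.swap)
  also have "\<dots> = (\<Sum>i\<in>K. \<Sum>p\<in>P. (ip K (v p) (u i))\<^sup>2)"
    unfolding u_def
    by (intro sum.cong refl) (subst ip_commute, simp add: ip_unit_vector[OF \<open>finite K\<close>])
  also have "\<dots> \<le> (\<Sum>i\<in>K. sq_norm K (u i))"
    by (intro sum_mono bessel_inequality[OF \<open>finite P\<close> unit orth])
  also have "\<dots> = real (card K)"
    by (simp add: sq_norm_unit_vector[OF \<open>finite K\<close>] u_def)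
  finally show ?thesis by simp
qed

lemma finite_eigenvalues:
  assumes K: "finite K" and H: "symmetric_on K H"
  shows "finite (eigenvalues K H)"
proof -
  have "card G \<le> card K" if G: "G \<subseteq> eigenvalues K H" "finite G" for G
  proof -
    define a where "a e = (SOME a. (\<exists>j\<in>K. a j \<noteq> 0) \<and> (\<forall>i\<in>K. mat_vec K H a i = e * a i))" for e
    have a: "(\<exists>j\<in>K. a e j \<noteq> 0) \<and> (\<forall>i\<in>K. mat_vec K H (a e) i = e * a e i)" if "e \<in> G" for e
    proof -
      have "e \<in> eigenvalues K H" using G(1) that by blast
      then show ?thesis unfolding a_def eigenvalues_def mem_Collect_eq by (rule someI_ex)
    qed
    have pos: "0 < sq_norm K (a e)" if "e \<in> G" for e
      using a[OF that] sq_norm_pos[OF K] by blast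
    define s where "s e = 1 / sqrt (sq_norm K (a e))" for e
    define v where "v e = (\<lambda>i. s e * a e i)" for e
    have unit: "sq_norm K (v e) = 1" if "e \<in> G" for e
      using pos[OF that] unfolding v_def sq_norm_scale by (simp add: s_def power_divide)
    have eigen: "\<forall>i\<in>K. mat_vec K H (v e) i = e * v e i" if "e \<in> G" for e
      using a[OF that] by (simp add: v_def mat_vec_def mult.left_commute sum_distrib_left[symmetric])
    show ?thesis
      using unit eigenvectors_orthogonal[OF H eigen eigen]
      by (intro card_orthonormal_le[OF G(2) K, of v]) auto
  qed
  then show ?thesis
    using finite_if_finite_subsets_card_bdd[of "eigenvalues K H" "card K"] by simp
qed

lemma continuous_map_sq_norm:
  "finite K \<Longrightarrow> continuous_map (powertop_real K) euclideanreal (sq_norm K)"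
  unfolding sq_norm_def
  by (intro continuous_map_sum continuous_map_real_pow)
     (auto intro: continuous_map_product_projection[of _ K "\<lambda>_. euclideanreal", simplified])

lemma continuous_map_quad_form:
  "finite K \<Longrightarrow> continuous_map (powertop_real K) euclideanreal (quad_form K H)"
  unfolding bilin_form_def
  by (intro continuous_map_sum continuous_map_real_mult continuous_map_canonical_const)
     (auto intro: continuous_map_product_projection[of _ K "\<lambda>_. euclideanreal", simplified])

lemma compactin_unit_sphere:
  assumes "finite K"
  shows "compactin (powertop_real K) {a \<in> topspace (powertop_real K). sq_norm K a = 1}"
    (is "compactin ?X ?S")
proof -
  have bounded: "?S \<subseteq> PiE K (\<lambda>_. {-1..1})"
  proof
    fix a assume a: "a \<in> ?S"
    have "\<bar>a i\<bar> \<le> 1" if "i \<in> K" for i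
    proof -
      have "(a i)\<^sup>2 \<le> sq_norm K a"
        unfolding sq_norm_def using that assms by (intro member_le_sum) auto
      then show ?thesis using a by (simp add: abs_square_le_1)
    qed
    then show "a \<in> PiE K (\<lambda>_. {-1..1})"
      using a by (auto simp: PiE_def Pi_def abs_le_iff)
  qed
  have closed: "closedin ?X ?S"
    using closedin_continuous_map_preimage[OF continuous_map_sq_norm[OF assms], of "{1}"] by simp
  have "compactin ?X (PiE K (\<lambda>_. {-1..1}))"
    by (simp add: compactin_PiE)
  then show ?thesis using bounded closed by (rule closed_compactin)
qed

lemma quad_form_attains_min_on_unit_sphere:
  assumes "finite K" "K \<noteq> {}"
  obtains v where "sq_norm K v = 1" "\<And>a. sq_norm K a = 1 \<Longrightarrow> quad_form K H v \<le> quad_form K H a"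
proof -
  define S where "S = {a \<in> topspace (powertop_real K). sq_norm K a = 1}"
  have "compact (quad_form K H ` S)"
    using image_compactin[OF compactin_unit_sphere continuous_map_quad_form] assms(1)
    by (simp add: S_def)
  moreover obtain k where k: "k \<in> K" using assms(2) by blast
  then have "restrict (\<lambda>i. if i = k then 1 else 0) K \<in> S"
    using sq_norm_unit_vector[OF assms(1) k] by (simp add: S_def sq_norm_def)
  ultimately obtain v where v: "v \<in> S" "\<And>a. a \<in> S \<Longrightarrow> quad_form K H v \<le> quad_form K H a"
    using compact_attains_inf[of "quad_form K H ` S"] by blast
  show thesis
  proof (rule that)
    show "sq_norm K v = 1" using v(1) by (simp add: S_def)
    fix a assume "sq_norm K a = 1"
    then have "restrict a K \<in> S" by (simp add: S_def sq_norm_def)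
    then have "quad_form K H v \<le> quad_form K H (restrict a K)" by (rule v(2))
    also have "\<dots> = quad_form K H a" by (rule quad_form_cong) simp
    finally show "quad_form K H v \<le> quad_form K H a" .
  qed
qed

lemma nonneg_quadratic_linear_coeff_zero:
  fixes \<beta> \<gamma> :: real
  assumes "\<And>t. 0 \<le> t * \<beta> + t\<^sup>2 * \<gamma>"
  shows "\<beta> = 0"
proof (rule ccontr)
  assume "\<beta> \<noteq> 0"
  define d where "d = \<bar>\<gamma>\<bar> + 1"
  have d: "0 < d" "\<gamma> - d < 0" unfolding d_def by auto
  have "(- \<beta> / d) * \<beta> + (- \<beta> / d)\<^sup>2 * \<gamma> = \<beta>\<^sup>2 * (\<gamma> - d) / d\<^sup>2"
    using d by (simp add: field_simps power2_eq_square)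
  also have "\<dots> < 0"
    using \<open>\<beta> \<noteq> 0\<close> d by (intro divide_neg_pos mult_pos_neg) auto
  finally show False using assms[of "- \<beta> / d"] by linarith
qed

text \<open>First-order condition: perturbing \<open>v\<close> along the \<open>j\<close>-th unit vector
  cannot decrease the Rayleigh quotient, so the linear term vanishes.\<close>

lemma rayleigh_minimizer_eigenvector:
  assumes K: "finite K" and H: "symmetric_on K H"
    and attained: "quad_form K H v = \<mu> * sq_norm K v"
    and min: "\<And>a. \<mu> * sq_norm K a \<le> quad_form K H a"
  shows "\<forall>j\<in>K. mat_vec K H v j = \<mu> * v j"
proof
  fix j assume j: "j \<in> K"
  define w where "w i = (if i = j then 1 else 0 :: real)" for i
  have "0 \<le> t * (2 * (bilin_form K H v w - \<mu> * ip K v w)) + t\<^sup>2 * (quad_form K H w - \<mu> * sq_norm K w)"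
    for t
    using min[of "\<lambda>i. v i + t * w i"] attained
    unfolding quad_form_add[OF H] sq_norm_add by (simp add: algebra_simps)
  then have "bilin_form K H v w = \<mu> * ip K v w"
    using nonneg_quadratic_linear_coeff_zero by fastforce
  moreover have "bilin_form K H v w = bilin_form K H w v" by (rule bilin_form_commute[OF H])
  moreover have "bilin_form K H w v = mat_vec K H v j"
    unfolding bilin_form_eq_ip w_def by (rule ip_unit_vector[OF K j])
  moreover have "ip K v w = v j"
    unfolding ip_commute[of K v] w_def by (rule ip_unit_vector[OF K j])
  ultimately show "mat_vec K H v j = \<mu> * v j" by simp
qed

lemma rayleigh_min_eigenvalue:
  assumes K: "finite K" "K \<noteq> {}" and H: "symmetric_on K H"
  obtains \<mu> where "\<mu> \<in> eigenvalues K H" "\<And>a. \<mu> * sq_norm K a \<le> quad_form K H a"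
proof -
  obtain v where v: "sq_norm K v = 1"
    and v_min: "\<And>a. sq_norm K a = 1 \<Longrightarrow> quad_form K H v \<le> quad_form K H a"
    using quad_form_attains_min_on_unit_sphere[OF K] by blast
  define \<mu> where "\<mu> = quad_form K H v"
  have lower: "\<mu> * sq_norm K a \<le> quad_form K H a" for a
  proof (cases "sq_norm K a = 0")
    case True
    then have "quad_form K H a = quad_form K H (\<lambda>_. 0)"
      using sq_norm_eq_0_iff[OF K(1)] by (intro quad_form_cong) auto
    then show ?thesis using True by (simp add: bilin_form_def)
  next
    case False
    define r where "r = sq_norm K a"
    have r: "0 < r" using False sq_norm_nonneg[of K a] unfolding r_def by linarith
    have "sq_norm K (\<lambda>i. (1 / sqrt r) * a i) = 1"
      unfolding sq_norm_scale using r by (simp add: r_def power_divide)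
    then have "\<mu> \<le> (1 / sqrt r)\<^sup>2 * quad_form K H a"
      unfolding \<mu>_def quad_form_scale[symmetric] by (rule v_min)
    then show ?thesis using r by (simp add: r_def power_divide field_simps)
  qed
  have "\<forall>j\<in>K. mat_vec K H v j = \<mu> * v j"
    using v lower by (intro rayleigh_minimizer_eigenvector[OF K(1) H]) (simp_all add: \<mu>_def)
  moreover have "\<exists>j\<in>K. v j \<noteq> 0"
    using v sq_norm_eq_0_iff[OF K(1), of v] by auto
  ultimately have "\<mu> \<in> eigenvalues K H" by (auto simp: eigenvalues_def)
  then show thesis using lower by (rule that)
qed

lemma lambda_min_eigenvalue:
  assumes "finite K" "K \<noteq> {}" "symmetric_on K H"
  shows "lambda_min K H \<in> eigenvalues K H"
  using rayleigh_min_eigenvalue[OF assms] finite_eigenvalues[OF assms(1,3)]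
  unfolding lambda_min_def by (metis Min_in empty_iff)

lemma quad_form_ge_lambda_min:
  assumes "finite K" "K \<noteq> {}" "symmetric_on K H"
  shows "lambda_min K H * sq_norm K a \<le> quad_form K H a"
proof -
  obtain \<mu> where \<mu>: "\<mu> \<in> eigenvalues K H" "\<And>a. \<mu> * sq_norm K a \<le> quad_form K H a"
    using rayleigh_min_eigenvalue[OF assms] by blast
  have "lambda_min K H \<le> \<mu>"
    unfolding lambda_min_def using finite_eigenvalues[OF assms(1,3)] \<mu>(1) by (rule Min_le)
  then have "lambda_min K H * sq_norm K a \<le> \<mu> * sq_norm K a"
    by (intro mult_right_mono sq_norm_nonneg)
  also have "\<dots> \<le> quad_form K H a" by (rule \<mu>(2))
  finally show ?thesis .
qed

lemma lambda_min_mono_quad_form: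
  assumes K: "finite K" "K \<noteq> {}" and H: "symmetric_on K H" and C: "symmetric_on K C"
    and "0 \<le> c" and dominates: "\<And>a. c * quad_form K C a \<le> quad_form K H a"
  shows "c * lambda_min K C \<le> lambda_min K H"
proof -
  obtain a where a: "\<exists>j\<in>K. a j \<noteq> 0" "\<forall>i\<in>K. mat_vec K H a i = lambda_min K H * a i"
    using lambda_min_eigenvalue[OF K H] unfolding eigenvalues_def by blast
  have "(c * lambda_min K C) * sq_norm K a \<le> c * quad_form K C a"
    using quad_form_ge_lambda_min[OF K C] \<open>0 \<le> c\<close> by (simp add: mult.assoc mult_left_mono)
  also have "\<dots> \<le> quad_form K H a" by (rule dominates)
  also have "\<dots> = lambda_min K H * sq_norm K a" by (rule quad_form_eigenvector[OF a(2)])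
  finally show ?thesis
    using a(1) sq_norm_pos[OF K(1)] by (meson mult_le_cancel_right_pos)
qed

lemma weighted_variance_ge:
  fixes w y :: "nat \<Rightarrow> real"
  assumes "1 \<le> n" and "0 \<le> \<kappa>" and w: "\<And>l. l < n \<Longrightarrow> \<kappa> \<le> w l" and "(\<Sum>l<n. w l) = 1"
  shows "\<kappa> * (\<Sum>l<n. (y l - (\<Sum>l<n. y l) / real n)\<^sup>2)
    \<le> (\<Sum>l<n. w l * (y l)\<^sup>2) - (\<Sum>l<n. w l * y l)\<^sup>2"
proof -
  define \<mu> where "\<mu> = (\<Sum>l<n. w l * y l)"
  define m where "m = (\<Sum>l<n. y l) / real n"
  have sum_y: "(\<Sum>l<n. y l) = real n * m" using \<open>1 \<le> n\<close> by (simp add: m_def)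
  have "(\<Sum>l<n. (y l - \<mu>)\<^sup>2) = (\<Sum>l<n. (y l - m)\<^sup>2 + 2 * (m - \<mu>) * (y l - m) + (m - \<mu>)\<^sup>2)"
    by (intro sum.cong refl) (simp add: power2_eq_square algebra_simps)
  also have "\<dots> = (\<Sum>l<n. (y l - m)\<^sup>2) + 2 * (m - \<mu>) * ((\<Sum>l<n. y l) - real n * m)
      + real n * (m - \<mu>)\<^sup>2"
    by (simp add: sum.distrib sum_distrib_left sum_subtractf algebra_simps)
  also have "\<dots> = (\<Sum>l<n. (y l - m)\<^sup>2) + real n * (m - \<mu>)\<^sup>2"
    using sum_y by simp
  finally have "(\<Sum>l<n. (y l - m)\<^sup>2) \<le> (\<Sum>l<n. (y l - \<mu>)\<^sup>2)" by simp
  then have "\<kappa> * (\<Sum>l<n. (y l - m)\<^sup>2) \<le> (\<Sum>l<n. \<kappa> * (y l - \<mu>)\<^sup>2)"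
    using \<open>0 \<le> \<kappa>\<close> by (simp add: sum_distrib_left[symmetric] mult_left_mono)
  also have "\<dots> \<le> (\<Sum>l<n. w l * (y l - \<mu>)\<^sup>2)"
    using w by (intro sum_mono mult_right_mono) auto
  also have "\<dots> = (\<Sum>l<n. w l * (y l)\<^sup>2) - 2 * \<mu> * (\<Sum>l<n. w l * y l) + \<mu>\<^sup>2 * (\<Sum>l<n. w l)"
    by (simp add: power2_diff algebra_simps sum.distrib sum_subtractf sum_distrib_left sum_distrib_right)
  also have "\<dots> = (\<Sum>l<n. w l * (y l)\<^sup>2) - \<mu>\<^sup>2"
    using \<open>(\<Sum>l<n. w l) = 1\<close> by (simp add: \<mu>_def power2_eq_square)
  finally show ?thesis by (simp add: \<mu>_def m_def)
qed

text \<open>The partial derivative of \<open>\<theta> \<mapsto> ip J \<theta> c\<close> in direction \<open>i\<close>.\<close>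

definition ip_coeff :: "'i set \<Rightarrow> 'i \<Rightarrow> ('i \<Rightarrow> real) \<Rightarrow> real" where
  "ip_coeff J i c = (if i \<in> J then c i else 0)"

lemma ip_fun_upd:
  assumes "finite J"
  shows "ip J (\<theta>(i := s)) c = ip J \<theta> c + (s - \<theta> i) * ip_coeff J i c"
proof (cases "i \<in> J")
  case True
  then show ?thesis
    using assms by (simp add: ip_def ip_coeff_def sum.remove algebra_simps)
next
  case False
  then show ?thesis by (auto simp: ip_def ip_coeff_def intro!: sum.cong)
qed

definition sum_exp :: "'i set \<Rightarrow> nat \<Rightarrow> (nat \<Rightarrow> 'i \<Rightarrow> real) \<Rightarrow> ('i \<Rightarrow> real) \<Rightarrow> real" where
  "sum_exp J n F \<theta> = (\<Sum>l<n. exp (ip J \<theta> (F l)))"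

lemma sum_exp_pos: "1 \<le> n \<Longrightarrow> 0 < sum_exp J n F \<theta>"
  unfolding sum_exp_def by (intro sum_pos) (auto simp: lessThan_empty_iff)

definition lse_loss :: "'i set \<Rightarrow> nat \<Rightarrow> (nat \<Rightarrow> 'i \<Rightarrow> real) \<Rightarrow> nat \<Rightarrow> (nat \<Rightarrow> 'i \<Rightarrow> real)
    \<Rightarrow> ('i \<Rightarrow> real) \<Rightarrow> real" where
  "lse_loss J np Fp n F \<theta> = - (\<Sum>l<np. ip J \<theta> (Fp l)) / real np + ln (sum_exp J n F \<theta> / real n)"

definition lse_grad :: "'i set \<Rightarrow> nat \<Rightarrow> (nat \<Rightarrow> 'i \<Rightarrow> real) \<Rightarrow> nat \<Rightarrow> (nat \<Rightarrow> 'i \<Rightarrow> real)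
    \<Rightarrow> 'i \<Rightarrow> ('i \<Rightarrow> real) \<Rightarrow> real" where
  "lse_grad J np Fp n F j \<theta> = - (\<Sum>l<np. ip_coeff J j (Fp l)) / real np
     + (\<Sum>l<n. ip_coeff J j (F l) * exp (ip J \<theta> (F l))) / sum_exp J n F \<theta>"

definition lse_hessian :: "'i set \<Rightarrow> nat \<Rightarrow> (nat \<Rightarrow> 'i \<Rightarrow> real) \<Rightarrow> 'i \<Rightarrow> 'i \<Rightarrow> ('i \<Rightarrow> real) \<Rightarrow> real"
  where
  "lse_hessian J n F i j \<theta> =
     (\<Sum>l<n. ip_coeff J i (F l) * ip_coeff J j (F l) * exp (ip J \<theta> (F l))) / sum_exp J n F \<theta>
     - (\<Sum>l<n. ip_coeff J j (F l) * exp (ip J \<theta> (F l)))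
       * (\<Sum>l<n. ip_coeff J i (F l) * exp (ip J \<theta> (F l))) / (sum_exp J n F \<theta>)\<^sup>2"

lemma pderiv_lse_loss:
  assumes J: "finite J" and np: "1 \<le> np" and n: "1 \<le> n"
  shows "pderiv_at j (lse_loss J np Fp n F) \<theta> = lse_grad J np Fp n F j \<theta>"
proof -
  have E: "(\<Sum>l<n. exp (ip J \<theta> (F l) + (\<theta> j - \<theta> j) * ip_coeff J j (F l))) = sum_exp J n F \<theta>"
    by (simp add: sum_exp_def)
  have "((\<lambda>s. - (\<Sum>l<np. ip J \<theta> (Fp l) + (s - \<theta> j) * ip_coeff J j (Fp l)) / real np
       + ln ((\<Sum>l<n. exp (ip J \<theta> (F l) + (s - \<theta> j) * ip_coeff J j (F l))) / real n))
     has_real_derivative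
       (- (\<Sum>l<np. ip_coeff J j (Fp l)) / real np
       + ((\<Sum>l<n. exp (ip J \<theta> (F l) + (\<theta> j - \<theta> j) * ip_coeff J j (F l)) * ip_coeff J j (F l)) / real n)
         / ((\<Sum>l<n. exp (ip J \<theta> (F l) + (\<theta> j - \<theta> j) * ip_coeff J j (F l))) / real n))) (at (\<theta> j))"
    using sum_exp_pos[OF n, of J F \<theta>] n np
    by (auto intro!: derivative_eq_intros simp: E sum_negf[symmetric] sum_exp_def)
  then have "((\<lambda>s. lse_loss J np Fp n F (\<theta>(j := s))) has_real_derivative lse_grad J np Fp n F j \<theta>)
      (at (\<theta> j))"
    using n sum_exp_pos[OF n, of J F \<theta>]
    by (simp add: lse_loss_def lse_grad_def sum_exp_def ip_fun_upd[OF J] E mult.commute)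
  then show ?thesis unfolding pderiv_at_def by (rule DERIV_imp_deriv)
qed

lemma pderiv_lse_grad:
  assumes J: "finite J" and n: "1 \<le> n"
  shows "pderiv_at i (lse_grad J np Fp n F j) \<theta> = lse_hessian J n F i j \<theta>"
proof -
  have "((\<lambda>s. - (\<Sum>l<np. ip_coeff J j (Fp l)) / real np
       + (\<Sum>l<n. ip_coeff J j (F l) * exp (ip J \<theta> (F l) + (s - \<theta> i) * ip_coeff J i (F l)))
       / (\<Sum>l<n. exp (ip J \<theta> (F l) + (s - \<theta> i) * ip_coeff J i (F l))))
     has_real_derivative lse_hessian J n F i j \<theta>) (at (\<theta> i))"
    using sum_exp_pos[OF n, of J F \<theta>] unfolding lse_hessian_def sum_exp_def
    by (auto intro!: derivative_eq_intros) (simp_all add: field_simps power2_eq_square)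
  then show ?thesis
    unfolding pderiv_at_def lse_grad_def sum_exp_def ip_fun_upd[OF J] by (rule DERIV_imp_deriv)
qed

lemma hessian_lse_loss:
  assumes "finite J" "1 \<le> np" "1 \<le> n"
  shows "hessian (lse_loss J np Fp n F) \<theta> = (\<lambda>i j. lse_hessian J n F i j \<theta>)"
proof -
  have "pderiv_at j (lse_loss J np Fp n F) = lse_grad J np Fp n F j" for j
    using pderiv_lse_loss[OF assms] by blast
  then show ?thesis
    unfolding hessian_def using pderiv_lse_grad[OF assms(1,3)] by simp
qed

lemma quad_form_cong_matrix:
  "(\<And>i j. i \<in> K \<Longrightarrow> j \<in> K \<Longrightarrow> H i j = H' i j) \<Longrightarrow> quad_form K H a = quad_form K H' a"
  unfolding bilin_form_def by (intro sum.cong refl) auto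

lemma quad_form_outer: "quad_form K (\<lambda>i j. u i * u j) a = (ip K a u)\<^sup>2"
  unfolding bilin_form_def ip_def power2_eq_square sum_product by (simp add: mult_ac)

lemma quad_form_diff: "quad_form K (\<lambda>i j. H i j - H' i j) a = quad_form K H a - quad_form K H' a"
  unfolding bilin_form_def by (simp add: algebra_simps sum_subtractf)

lemma quad_form_sum:
  "finite L \<Longrightarrow> quad_form K (\<lambda>i j. \<Sum>l\<in>L. H l i j) a = (\<Sum>l\<in>L. quad_form K (H l) a)"
  unfolding bilin_form_def
  by (simp add: sum_distrib_left sum_distrib_right sum.swap[of _ L K] sum.swap[of _ L] algebra_simps)

lemma quad_form_scaled_outer_sum:
  fixes n :: nat
  shows "quad_form K (\<lambda>i j. \<Sum>l<n. c l * (u l i * u l j)) a = (\<Sum>l<n. c l * (ip K a (u l))\<^sup>2)"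
proof -
  have "quad_form K (\<lambda>i j. \<Sum>l<n. c l * (u l i * u l j)) a
      = (\<Sum>l<n. quad_form K (\<lambda>i j. c l * (u l i * u l j)) a)"
    by (rule quad_form_sum) simp
  also have "\<dots> = (\<Sum>l<n. c l * quad_form K (\<lambda>i j. u l i * u l j) a)"
    unfolding bilin_form_def by (simp add: sum_distrib_left mult_ac)
  finally show ?thesis by (simp add: quad_form_outer)
qed

lemma quad_form_lse_hessian:
  fixes F :: "nat \<Rightarrow> 'i \<Rightarrow> real" and \<theta> :: "'i \<Rightarrow> real" and n :: nat
  assumes "K \<subseteq> J"
  defines "w \<equiv> \<lambda>l. exp (ip J \<theta> (F l)) / sum_exp J n F \<theta>"
  shows "quad_form K (\<lambda>i j. lse_hessian J n F i j \<theta>) a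
    = (\<Sum>l<n. w l * (ip K a (F l))\<^sup>2) - (\<Sum>l<n. w l * ip K a (F l))\<^sup>2"
proof -
  define u where "u i = (\<Sum>l<n. w l * F l i)" for i
  have "quad_form K (\<lambda>i j. lse_hessian J n F i j \<theta>) a
      = quad_form K (\<lambda>i j. (\<Sum>l<n. w l * (F l i * F l j)) - u i * u j) a"
  proof (rule quad_form_cong_matrix)
    fix i j assume "i \<in> K" "j \<in> K"
    with assms(1) have "i \<in> J" "j \<in> J" by auto
    then show "lse_hessian J n F i j \<theta> = (\<Sum>l<n. w l * (F l i * F l j)) - u i * u j"
      unfolding lse_hessian_def u_def w_def ip_coeff_def
      by (simp add: sum_divide_distrib power2_eq_square mult_ac)
         (simp add: sum_divide_distrib[symmetric])
  qed
  also have "\<dots> = (\<Sum>l<n. w l * (ip K a (F l))\<^sup>2) - (ip K a u)\<^sup>2"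
    by (simp add: quad_form_diff quad_form_outer quad_form_scaled_outer_sum)
  also have "ip K a u = (\<Sum>l<n. w l * ip K a (F l))"
    unfolding u_def ip_def by (simp add: sum_distrib_left sum.swap[of _ K] mult_ac)
  finally show ?thesis .
qed

lemma quad_form_scov:
  assumes "1 \<le> n"
  shows "quad_form K (scov n F) a
    = (\<Sum>l<n. (ip K a (F l) - (\<Sum>l<n. ip K a (F l)) / real n)\<^sup>2) / real n"
proof -
  define g where "g l i = F l i - smean n F i" for l i
  have "ip K a (smean n F) = (\<Sum>l<n. ip K a (F l)) / real n"
    unfolding smean_def ip_def
    by (simp add: sum_divide_distrib[symmetric] sum_distrib_left sum.swap[of _ K] mult_ac)
  then have ip_g: "ip K a (g l) = ip K a (F l) - (\<Sum>l<n. ip K a (F l)) / real n" for l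
    unfolding g_def ip_def by (simp add: algebra_simps sum_subtractf)
  have "quad_form K (scov n F) a = quad_form K (\<lambda>i j. \<Sum>l<n. (1 / real n) * (g l i * g l j)) a"
    by (rule quad_form_cong_matrix) (simp add: scov_def g_def sum_divide_distrib)
  also have "\<dots> = (\<Sum>l<n. (1 / real n) * (ip K a (g l))\<^sup>2)"
    by (rule quad_form_scaled_outer_sum)
  finally show ?thesis by (simp add: ip_g sum_divide_distrib)
qed

lemma symmetric_on_lse_hessian: "symmetric_on K (\<lambda>i j. lse_hessian J n F i j \<theta>)"
  unfolding symmetric_on_def lse_hessian_def by (simp add: mult_ac)

lemma symmetric_on_scov: "symmetric_on K (scov n F)"
  unfolding symmetric_on_def scov_def by (simp add: mult_ac)

text \<open>If \<open>K = {}\<close>, both minimal eigenvalues are the unspecified value \<open>Min {}\<close>,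
  which is why \<open>D\<close> enters as a separate lower bound.\<close>

lemma lambda_min_lse_hessian_ge:
  assumes J: "finite J" and "K \<subseteq> J" and n: "1 \<le> n" and "1 \<le> C" and "0 \<le> D"
    and ratio: "\<And>l. l < n \<Longrightarrow> 1 / C \<le> exp (ip J \<theta> (F l)) / (sum_exp J n F \<theta> / real n)"
    and cov: "D \<le> lambda_min K (scov n F)"
  shows "D / C \<le> lambda_min K (\<lambda>i j. lse_hessian J n F i j \<theta>)"
proof (cases "K = {}")
  case True
  then show ?thesis
    using cov \<open>1 \<le> C\<close> \<open>0 \<le> D\<close> by (simp add: lambda_min_def eigenvalues_def divide_le_eq)
      (smt (verit) mult_le_cancel_left1)
next
  case False
  have K: "finite K" using J \<open>K \<subseteq> J\<close> finite_subset by blast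
  define w where "w l = exp (ip J \<theta> (F l)) / sum_exp J n F \<theta>" for l
  have w_lower: "1 / (C * real n) \<le> w l" if "l < n" for l
    using ratio[OF that] n \<open>1 \<le> C\<close> by (simp add: w_def field_simps)
  have w_sum: "(\<Sum>l<n. w l) = 1"
    using sum_exp_pos[OF n, of J F \<theta>] by (simp add: w_def sum_exp_def sum_divide_distrib[symmetric])
  have "(1 / C) * quad_form K (scov n F) a \<le> quad_form K (\<lambda>i j. lse_hessian J n F i j \<theta>) a" for a
    using weighted_variance_ge[OF n _ w_lower w_sum, of "\<lambda>l. ip K a (F l)"] \<open>1 \<le> C\<close>
    unfolding quad_form_lse_hessian[OF \<open>K \<subseteq> J\<close>] quad_form_scov[OF n] by (simp add: w_def)
  then have "(1 / C) * lambda_min K (scov n F) \<le> lambda_min K (\<lambda>i j. lse_hessian J n F i j \<theta>)"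
    using \<open>1 \<le> C\<close> by (intro lambda_min_mono_quad_form[OF K False symmetric_on_lse_hessian
        symmetric_on_scov]) auto
  moreover have "D / C \<le> (1 / C) * lambda_min K (scov n F)"
    using cov \<open>1 \<le> C\<close> by (simp add: divide_right_mono)
  ultimately show ?thesis by linarith
qed

lemma one_le_if_bounds:
  fixes r C :: real
  assumes "0 < r" "1 / C \<le> r" "r \<le> C"
  shows "1 \<le> C"
proof -
  have "0 < C" using assms by linarith
  then have "1 \<le> C * r" using assms(2) by (simp add: divide_le_eq mult.commute)
  also have "\<dots> \<le> C * C" using \<open>0 < C\<close> assms(3) by simp
  finally show ?thesis
    using \<open>0 < C\<close> by (meson mult_le_cancel_right1 nle_le order.trans)
qed

lemma finite_Idx: "finite (Idx m b)"
proof -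
  have "E m \<subseteq> {..m} \<times> {..m}" by (auto simp: E_def)
  then show ?thesis unfolding Idx_def by (auto intro: finite_subset)
qed

lemma space_Lm_eq_space_Rm: "space (Lm m) = space (Rm m)"
  by (simp add: Lm_def Rm_def space_PiM)

lemma IdxS_supp_blocks_subset: "IdxS (supp_blocks m b \<theta>) b \<subseteq> Idx m b"
  unfolding IdxS_def Idx_def supp_blocks_def by auto

lemma loss_eq_lse_loss:
  "loss m b \<psi> np xp nq xq = lse_loss (Idx m b) np (\<lambda>l. feat \<psi> (xp l)) nq (\<lambda>l. feat \<psi> (xq l))"
  by (simp add: fun_eq_iff loss_def lse_loss_def Nhat_def sum_exp_def)

lemma rhat_eq_sum_exp:
  "rhat m b \<psi> nq xq x \<theta>
    = exp (ip (Idx m b) \<theta> (feat \<psi> x)) / (sum_exp (Idx m b) nq (\<lambda>l. feat \<psi> (xq l)) \<theta> / real nq)"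
  by (simp add: rhat_def Nhat_def sum_exp_def)

lemma lambda_min_hessian_loss_ge:
  assumes np: "1 \<le> np" and nq: "1 \<le> nq" and "0 < D"
    and ratio: "\<And>l. l < nq \<Longrightarrow> 1 / C \<le> rhat m b \<psi> nq xq (xq l) \<theta> \<and> rhat m b \<psi> nq xq (xq l) \<theta> \<le> C"
    and cov: "D \<le> lambda_min (IdxS (supp_blocks m b \<theta>s) b) (scov nq (\<lambda>l. feat \<psi> (xq l)))"
  shows "D / C\<^sup>2 \<le> lambda_min (IdxS (supp_blocks m b \<theta>s) b) (hessian (loss m b \<psi> np xp nq xq) \<theta>)"
proof -
  have "0 < rhat m b \<psi> nq xq (xq 0) \<theta>"
    unfolding rhat_eq_sum_exp using sum_exp_pos[OF nq] nq by (intro divide_pos_pos) auto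
  then have "1 \<le> C"
    using ratio[of 0] nq by (intro one_le_if_bounds) auto
  have "D / C \<le> lambda_min (IdxS (supp_blocks m b \<theta>s) b)
      (\<lambda>i j. lse_hessian (Idx m b) nq (\<lambda>l. feat \<psi> (xq l)) i j \<theta>)"
    using ratio cov \<open>1 \<le> C\<close> \<open>0 < D\<close> unfolding rhat_eq_sum_exp
    by (intro lambda_min_lse_hessian_ge[OF finite_Idx IdxS_supp_blocks_subset nq]) auto
  moreover have "D / C\<^sup>2 \<le> D / C"
    using \<open>1 \<le> C\<close> \<open>0 < D\<close> by (intro divide_left_mono) (auto simp: power2_eq_square)
  ultimately show ?thesis
    by (simp add: loss_eq_lse_loss hessian_lse_loss[OF finite_Idx np nq])
qed

theorem proposition7:
  fixes m b np nq :: nat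
    and \<psi> :: "real \<Rightarrow> real \<Rightarrow> nat \<Rightarrow> real"
    and P Q :: "(nat \<Rightarrow> real) measure"
    and p q :: "(nat \<Rightarrow> real) \<Rightarrow> real"
    and \<theta>s :: "(nat \<times> nat) \<times> nat \<Rightarrow> real"
    and M :: "'w measure"
    and Xp Xq :: "nat \<Rightarrow> 'w \<Rightarrow> nat \<Rightarrow> real"
    and Cmin Cmax Cratio Dmax1 Dmax2 Dmin2 \<delta>nq :: real
    and Cf :: "nat \<times> nat \<Rightarrow> real"
  defines "S \<equiv> supp_blocks m b \<theta>s"
  assumes M: "prob_space M"
    and np: "np \<ge> 1" and nq: "nq \<ge> 1"
    and P: "P = density (Lm m) p" "p \<in> borel_measurable (Lm m)" "\<forall>x\<in>space (Lm m). p x \<ge> 0"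
       "prob_space P"
    and Q: "Q = density (Lm m) q" "q \<in> borel_measurable (Lm m)" "\<forall>x\<in>space (Lm m). q x \<ge> 0"
       "prob_space Q"
    and Xp: "\<forall>l<np. Xp l \<in> measurable M (Rm m) \<and> distr M (Rm m) (Xp l) = P"
       "prob_space.indep_vars M (\<lambda>_. Rm m) Xp {..<np}"
    and Xq: "\<forall>l<nq. Xq l \<in> measurable M (Rm m) \<and> distr M (Rm m) (Xq l) = Q"
       "prob_space.indep_vars M (\<lambda>_. Rm m) Xq {..<nq}"
    and true_param: "\<forall>x\<in>space (Lm m). p x = q x * rfun m b \<psi> Q x \<theta>s"
    and A7_r: "\<forall>\<delta>. vnorm (Idx m b) \<delta> \<le> vnorm (Idx m b) \<theta>s \<longrightarrow>
        (\<forall>x\<in>space (Lm m). Cmin \<le> rfun m b \<psi> Q x (\<lambda>i. \<theta>s i + \<delta> i)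
                           \<and> rfun m b \<psi> Q x (\<lambda>i. \<theta>s i + \<delta> i) \<le> Cmax)"
    and A7_C: "0 < Cmin" "Cmin \<le> Cmax"
    and A7_rhat: "\<forall>\<delta>. vnorm (Idx m b) \<delta> \<le> vnorm (Idx m b) \<theta>s \<longrightarrow>
        (\<forall>\<omega>\<in>space M. \<forall>x\<in>space (Lm m).
            1 / Cratio \<le> rhat m b \<psi> nq (\<lambda>l. Xq l \<omega>) x (\<lambda>i. \<theta>s i + \<delta> i)
          \<and> rhat m b \<psi> nq (\<lambda>l. Xq l \<omega>) x (\<lambda>i. \<theta>s i + \<delta> i) \<le> Cratio)"
    and A7_f: "\<forall>t\<in>E m. \<forall>x\<in>space (Lm m). block_norm b (feat \<psi> x) t \<le> Cf t"
    and A8_as: "AE \<omega> in M.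
        (\<forall>t\<in>E m. (\<Sum>l<nq. block_norm b (feat \<psi> (Xq l \<omega>)) t) / real nq \<le> Dmax1)
      \<and> mat_norm (Idx m b) (ssecond nq (\<lambda>l. feat \<psi> (Xq l \<omega>))) \<le> Dmax2
      \<and> mat_norm (Idx m b) (scov nq (\<lambda>l. feat \<psi> (Xq l \<omega>))) \<le> Dmax2"
    and A8_min: "Dmin2 > 0"
      "\<exists>A\<in>sets M. measure M A \<ge> 1 - \<delta>nq \<and>
         (\<forall>\<omega>\<in>A. lambda_min (IdxS S b) (scov nq (\<lambda>l. feat \<psi> (Xq l \<omega>))) \<ge> Dmin2)"
  shows "\<forall>\<delta>. vnorm (Idx m b) \<delta> \<le> vnorm (Idx m b) \<theta>s \<longrightarrow>
      (\<exists>A\<in>sets M. measure M A \<ge> 1 - \<delta>nq \<and>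
         (\<forall>\<omega>\<in>A. lambda_min (IdxS S b)
             (hessian (loss m b \<psi> np (\<lambda>l. Xp l \<omega>) nq (\<lambda>l. Xq l \<omega>)) (\<lambda>i. \<theta>s i + \<delta> i))
           \<ge> Dmin2 / Cratio\<^sup>2))"
proof (intro allI impI)
  fix \<delta> :: "(nat \<times> nat) \<times> nat \<Rightarrow> real"
  assume \<delta>: "vnorm (Idx m b) \<delta> \<le> vnorm (Idx m b) \<theta>s"
  obtain A where A: "A \<in> sets M" "1 - \<delta>nq \<le> measure M A"
    and cov: "\<And>\<omega>. \<omega> \<in> A \<Longrightarrow> Dmin2 \<le> lambda_min (IdxS S b) (scov nq (\<lambda>l. feat \<psi> (Xq l \<omega>)))"
    using A8_min(2) by blast
  have "Dmin2 / Cratio\<^sup>2 \<le> lambda_min (IdxS S b)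
      (hessian (loss m b \<psi> np (\<lambda>l. Xp l \<omega>) nq (\<lambda>l. Xq l \<omega>)) (\<lambda>i. \<theta>s i + \<delta> i))"
    if "\<omega> \<in> A" for \<omega>
    unfolding S_def
  proof (rule lambda_min_hessian_loss_ge[OF np nq A8_min(1) _ cov[OF that, unfolded S_def]])
    fix l assume "l < nq"
    moreover have "\<omega> \<in> space M" using that A(1) sets.sets_into_space by blast
    ultimately have "Xq l \<omega> \<in> space (Lm m)"
      using Xq(1) unfolding space_Lm_eq_space_Rm by (blast intro: measurable_space)
    then show "1 / Cratio \<le> rhat m b \<psi> nq (\<lambda>l. Xq l \<omega>) (Xq l \<omega>) (\<lambda>i. \<theta>s i + \<delta> i)
      \<and> rhat m b \<psi> nq (\<lambda>l. Xq l \<omega>) (Xq l \<omega>) (\<lambda>i. \<theta>s i + \<delta> i) \<le> Cratio"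
      using A7_rhat \<delta> \<open>\<omega> \<in> space M\<close> by blast
  qed
  then show "\<exists>A\<in>sets M. 1 - \<delta>nq \<le> measure M A \<and> (\<forall>\<omega>\<in>A. Dmin2 / Cratio\<^sup>2 \<le> lambda_min (IdxS S b)
      (hessian (loss m b \<psi> np (\<lambda>l. Xp l \<omega>) nq (\<lambda>l. Xq l \<omega>)) (\<lambda>i. \<theta>s i + \<delta> i)))"
    using A by blast
qed

end
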